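(* Let $S^+=\{\overline{\jmath}_1,\dots,\overline{\jmath}_\nu\}$ be distinct positive integers, $S=S^+\cup(-S^+)$, $S^c=\mathbb{Z}\setminus(S\cup\{0\})$, and $\xi\in[1,2]^\nu$ (indexed by $S^+$, $\xi_{\overline{\jmath}_i}=\xi_i$). Define for $j\in S^c$ $$\mathfrak l_j:=\frac23\sum_{j_2\in S^+}\frac{(1+j_2^2)(1+j^2)(2+j_2^2+j^2)}{(3+j_2^2-j_2j+j^2)(3+j_2^2+j_2j+j^2)}\xi_{j_2},\qquad c:=\frac23\sum_{j\in S^+}(1+j^2)\xi_j,$$ and $\kappa_j:=\lambda(j)(\mathfrak l_j-c)$, where $\lambda(j)=j\frac{4+j^2}{1+j^2}$. Then there is a constant $C>0$ depending on the set $S$ such that $|j|\,|\kappa_j|\le C$ for all $j\in S^c$. *)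

theory Defs
  imports Complex_Main
begin

definition lam :: "int \<Rightarrow> real" where
  "lam j = real_of_int j * (4 + (real_of_int j)^2) / (1 + (real_of_int j)^2)"

definition frak_l :: "int set \<Rightarrow> (int \<Rightarrow> real) \<Rightarrow> int \<Rightarrow> real" where
  "frak_l Sp \<xi> j = 2/3 * (\<Sum>j2\<in>Sp.
     (1 + (real_of_int j2)^2) * (1 + (real_of_int j)^2) * (2 + (real_of_int j2)^2 + (real_of_int j)^2)
     / ((3 + (real_of_int j2)^2 - real_of_int j2 * real_of_int j + (real_of_int j)^2)
        * (3 + (real_of_int j2)^2 + real_of_int j2 * real_of_int j + (real_of_int j)^2))
     * \<xi> j2)"

definition c_const :: "int set \<Rightarrow> (int \<Rightarrow> real) \<Rightarrow> real" where
  "c_const Sp \<xi> = 2/3 * (\<Sum>j\<in>Sp. (1 + (real_of_int j)^2) * \<xi> j)"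

definition kappa :: "int set \<Rightarrow> (int \<Rightarrow> real) \<Rightarrow> int \<Rightarrow> real" where
  "kappa Sp \<xi> j = lam j * (frak_l Sp \<xi> j - c_const Sp \<xi>)"

definition Sfull :: "int set \<Rightarrow> int set" where
  "Sfull Sp = Sp \<union> uminus ` Sp"

definition Scompl :: "int set \<Rightarrow> int set" where
  "Scompl Sp = UNIV - (Sfull Sp \<union> {0})"

end

theory Submission
  imports Defs
begin

text \<open>
  As \<open>|j| \<rightarrow> \<infinity>\<close> the weight of \<open>\<xi>\<^sub>a\<close> in \<open>l\<^sub>j\<close> tends to \<open>1 + a\<^sup>2\<close>, the weight of
  \<open>\<xi>\<^sub>a\<close> in \<open>c\<close>; explicitly, the difference is \<open>(1 + a\<^sup>2) E / D\<close> with
  \<open>E = a\<^sup>4 + 5a\<^sup>2 + 3j\<^sup>2 + 7\<close> and the denominator \<open>D \<ge> 3/4 (3 + a\<^sup>2 + j\<^sup>2)\<^sup>2\<close>.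
  Hence \<open>j\<^sup>2 E / D \<le> 4/3 (a\<^sup>2 + 3)\<close>, and since \<open>|j \<lambda>(j)| \<le> 4 j\<^sup>2\<close>, every summand of
  \<open>j \<kappa>\<^sub>j\<close> is bounded independently of \<open>j\<close>. The denominators never vanish, so the
  bound holds for all integers \<open>j\<close>, not only on \<open>S\<^sup>c\<close>, and needs no hypothesis on \<open>S\<^sup>+\<close>.
\<close>

definition frak_l_weight :: "real \<Rightarrow> real \<Rightarrow> real" where
  "frak_l_weight a y = (1 + a\<^sup>2) * (1 + y\<^sup>2) * (2 + a\<^sup>2 + y\<^sup>2)
     / ((3 + a\<^sup>2 - a * y + y\<^sup>2) * (3 + a\<^sup>2 + a * y + y\<^sup>2))"

lemma kappa_eq_sum:
  "kappa Sp \<xi> j = 2/3 * (\<Sum>a\<in>Sp.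
     lam j * (frak_l_weight (real_of_int a) (real_of_int j) - (1 + (real_of_int a)\<^sup>2)) * \<xi> a)"
  unfolding kappa_def frak_l_def c_const_def frak_l_weight_def
  by (simp add: sum_subtractf [symmetric] sum_distrib_left algebra_simps)

lemma frak_l_denominator_lower_bound:
  fixes a y :: real
  shows "3/4 * (3 + a\<^sup>2 + y\<^sup>2)\<^sup>2 \<le> (3 + a\<^sup>2 - a * y + y\<^sup>2) * (3 + a\<^sup>2 + a * y + y\<^sup>2)"
proof -
  define s where "s = a\<^sup>2 + y\<^sup>2"
  have "(3 + a\<^sup>2 - a * y + y\<^sup>2) * (3 + a\<^sup>2 + a * y + y\<^sup>2) = (3 + s)\<^sup>2 - a\<^sup>2 * y\<^sup>2"
    unfolding s_def by (simp add: algebra_simps power2_eq_square)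
  moreover have "a\<^sup>2 * y\<^sup>2 \<le> s\<^sup>2 / 4"
    unfolding s_def using sum_squares_ge_zero[of "a\<^sup>2 - y\<^sup>2" 0]
    by (simp add: algebra_simps power2_eq_square)
  moreover have "0 \<le> s"
    unfolding s_def by simp
  ultimately show ?thesis
    unfolding s_def [symmetric] add.assoc [symmetric]
    by (simp add: power2_eq_square algebra_simps)
qed

lemma frak_l_denominator_pos:
  fixes a y :: real
  shows "0 < (3 + a\<^sup>2 - a * y + y\<^sup>2) * (3 + a\<^sup>2 + a * y + y\<^sup>2)"
proof -
  have "0 < 3 + a\<^sup>2 + y\<^sup>2"
    by (intro add_pos_nonneg) simp_all
  then have "0 < 3/4 * (3 + a\<^sup>2 + y\<^sup>2)\<^sup>2"
    by simp
  then show ?thesis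
    using frak_l_denominator_lower_bound order_less_le_trans by blast
qed

lemma one_plus_sq_minus_frak_l_weight:
  fixes a y :: real
  shows "(1 + a\<^sup>2) - frak_l_weight a y = (1 + a\<^sup>2) * (a ^ 4 + 5 * a\<^sup>2 + 3 * y\<^sup>2 + 7)
     / ((3 + a\<^sup>2 - a * y + y\<^sup>2) * (3 + a\<^sup>2 + a * y + y\<^sup>2))"
  using frak_l_denominator_pos[of a y] unfolding frak_l_weight_def
  by (simp add: field_simps) (simp add: algebra_simps power2_eq_square power4_eq_xxxx)

lemma sq_mult_abs_frak_l_weight_diff_le:
  fixes a y :: real
  shows "y\<^sup>2 * \<bar>frak_l_weight a y - (1 + a\<^sup>2)\<bar> \<le> 4/3 * (1 + a\<^sup>2) * (a\<^sup>2 + 3)"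
proof -
  define D where "D = (3 + a\<^sup>2 - a * y + y\<^sup>2) * (3 + a\<^sup>2 + a * y + y\<^sup>2)"
  define E where "E = a ^ 4 + 5 * a\<^sup>2 + 3 * y\<^sup>2 + 7"
  have D_pos: "0 < D"
    unfolding D_def by (rule frak_l_denominator_pos)
  have E_nonneg: "0 \<le> E"
    unfolding E_def by (simp add: add_nonneg_nonneg)
  have "y\<^sup>2 * E \<le> y\<^sup>2 * ((a\<^sup>2 + 3) * (3 + a\<^sup>2 + y\<^sup>2))"
    using mult_nonneg_nonneg[of "a * a" "y * y"]
    by (intro mult_left_mono) (simp_all add: E_def algebra_simps power2_eq_square power4_eq_xxxx)
  also have "\<dots> \<le> (3 + a\<^sup>2 + y\<^sup>2) * ((a\<^sup>2 + 3) * (3 + a\<^sup>2 + y\<^sup>2))"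
    by (intro mult_right_mono) (simp_all add: add_nonneg_nonneg)
  also have "\<dots> = 4/3 * (a\<^sup>2 + 3) * (3/4 * (3 + a\<^sup>2 + y\<^sup>2)\<^sup>2)"
    by (simp add: power2_eq_square) (simp add: algebra_simps)
  also have "\<dots> \<le> 4/3 * (a\<^sup>2 + 3) * D"
    unfolding D_def by (intro mult_left_mono frak_l_denominator_lower_bound) simp
  finally have bound: "y\<^sup>2 * E / D \<le> 4/3 * (a\<^sup>2 + 3)"
    using D_pos by (simp add: divide_le_eq)
  have "\<bar>frak_l_weight a y - (1 + a\<^sup>2)\<bar> = (1 + a\<^sup>2) * E / D"
    using D_pos E_nonneg unfolding abs_minus_commute [of "frak_l_weight a y"]
      one_plus_sq_minus_frak_l_weight D_def [symmetric] E_def [symmetric]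
    by simp
  then have "y\<^sup>2 * \<bar>frak_l_weight a y - (1 + a\<^sup>2)\<bar> = (1 + a\<^sup>2) * (y\<^sup>2 * E / D)"
    by simp
  also have "\<dots> \<le> (1 + a\<^sup>2) * (4/3 * (a\<^sup>2 + 3))"
    using bound by (rule mult_left_mono) simp
  also have "\<dots> = 4/3 * (1 + a\<^sup>2) * (a\<^sup>2 + 3)"
    by (simp add: algebra_simps)
  finally show ?thesis .
qed

lemma abs_mult_lam_le: "\<bar>real_of_int j * lam j\<bar> \<le> 4 * (real_of_int j)\<^sup>2"
proof -
  have "0 < 1 + (real_of_int j)\<^sup>2"
    by (simp add: add_pos_nonneg)
  have "\<bar>real_of_int j * lam j\<bar> = (real_of_int j)\<^sup>2 * ((4 + (real_of_int j)\<^sup>2) / (1 + (real_of_int j)\<^sup>2))"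
    unfolding lam_def by (simp add: abs_mult power2_eq_square)
  also have "\<dots> \<le> (real_of_int j)\<^sup>2 * 4"
    using \<open>0 < 1 + (real_of_int j)\<^sup>2\<close> by (intro mult_left_mono) (simp_all add: field_simps)
  finally show ?thesis
    by simp
qed

lemma abs_mult_kappa_summand_le:
  "\<bar>real_of_int j * lam j * (frak_l_weight (real_of_int a) (real_of_int j) - (1 + (real_of_int a)\<^sup>2))\<bar>
     \<le> 16/3 * (1 + (real_of_int a)\<^sup>2) * ((real_of_int a)\<^sup>2 + 3)"
proof -
  let ?d = "\<bar>frak_l_weight (real_of_int a) (real_of_int j) - (1 + (real_of_int a)\<^sup>2)\<bar>"
  have "\<bar>real_of_int j * lam j * (frak_l_weight (real_of_int a) (real_of_int j) - (1 + (real_of_int a)\<^sup>2))\<bar>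
      = \<bar>real_of_int j * lam j\<bar> * ?d"
    by (rule abs_mult)
  also have "\<dots> \<le> 4 * ((real_of_int j)\<^sup>2 * ?d)"
    using mult_right_mono [OF abs_mult_lam_le, of ?d j] by simp
  also have "\<dots> \<le> 4 * (4/3 * (1 + (real_of_int a)\<^sup>2) * ((real_of_int a)\<^sup>2 + 3))"
    using sq_mult_abs_frak_l_weight_diff_le by (intro mult_left_mono) simp_all
  also have "\<dots> = 16/3 * (1 + (real_of_int a)\<^sup>2) * ((real_of_int a)\<^sup>2 + 3)"
    by simp
  finally show ?thesis .
qed

lemma abs_mult_kappa_le:
  assumes "\<And>a. a \<in> Sp \<Longrightarrow> \<bar>\<xi> a\<bar> \<le> M"
  shows "\<bar>real_of_int j\<bar> * \<bar>kappa Sp \<xi> j\<bar>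
    \<le> 32/9 * M * (\<Sum>a\<in>Sp. (1 + (real_of_int a)\<^sup>2) * ((real_of_int a)\<^sup>2 + 3))"
proof -
  define t where "t a = real_of_int j * lam j
    * (frak_l_weight (real_of_int a) (real_of_int j) - (1 + (real_of_int a)\<^sup>2)) * \<xi> a" for a
  define K where "K a = 16/3 * (1 + (real_of_int a)\<^sup>2) * ((real_of_int a)\<^sup>2 + 3) * M" for a
  have summand_le: "\<bar>t a\<bar> \<le> K a" if "a \<in> Sp" for a
  proof -
    have "\<bar>t a\<bar> = \<bar>real_of_int j * lam j
        * (frak_l_weight (real_of_int a) (real_of_int j) - (1 + (real_of_int a)\<^sup>2))\<bar> * \<bar>\<xi> a\<bar>"
      unfolding t_def by (rule abs_mult)
    also have "\<dots> \<le> K a"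
      unfolding K_def using assms that by (intro mult_mono abs_mult_kappa_summand_le) auto
    finally show ?thesis .
  qed
  have "real_of_int j * kappa Sp \<xi> j = 2/3 * (\<Sum>a\<in>Sp. t a)"
    unfolding kappa_eq_sum t_def by (simp add: sum_distrib_left mult_ac)
  then have "\<bar>real_of_int j\<bar> * \<bar>kappa Sp \<xi> j\<bar> = 2/3 * \<bar>\<Sum>a\<in>Sp. t a\<bar>"
    by (simp add: abs_mult [symmetric])
  also have "\<dots> \<le> 2/3 * (\<Sum>a\<in>Sp. K a)"
    using order_trans [OF sum_abs sum_mono [OF summand_le]] by simp
  also have "\<dots> = 2/3 * (\<Sum>a\<in>Sp. 16/3 * M * ((1 + (real_of_int a)\<^sup>2) * ((real_of_int a)\<^sup>2 + 3)))"
    unfolding K_def by (simp only: mult_ac)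
  also have "\<dots> = 32/9 * M * (\<Sum>a\<in>Sp. (1 + (real_of_int a)\<^sup>2) * ((real_of_int a)\<^sup>2 + 3))"
    by (simp only: sum_distrib_left [symmetric])
  finally show ?thesis .
qed

theorem lemma7p3:
  fixes Sp :: "int set"
  assumes "finite Sp" and "\<forall>j\<in>Sp. j > 0"
  shows "\<exists>C>0. \<forall>\<xi> :: int \<Rightarrow> real. (\<forall>j\<in>Sp. 1 \<le> \<xi> j \<and> \<xi> j \<le> 2) \<longrightarrow>
           (\<forall>j\<in>Scompl Sp. \<bar>real_of_int j\<bar> * \<bar>kappa Sp \<xi> j\<bar> \<le> C)"
proof -
  define B where "B = 64/9 * (\<Sum>a\<in>Sp. (1 + (real_of_int a)\<^sup>2) * ((real_of_int a)\<^sup>2 + 3))"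
  have "0 \<le> B"
    unfolding B_def by (intro mult_nonneg_nonneg sum_nonneg) (simp_all add: add_nonneg_nonneg)
  moreover have "\<bar>real_of_int j\<bar> * \<bar>kappa Sp \<xi> j\<bar> \<le> B"
    if "\<forall>a\<in>Sp. 1 \<le> \<xi> a \<and> \<xi> a \<le> 2" for \<xi> j
  proof -
    have "\<bar>\<xi> a\<bar> \<le> 2" if "a \<in> Sp" for a
      using \<open>\<forall>a\<in>Sp. 1 \<le> \<xi> a \<and> \<xi> a \<le> 2\<close> that by fastforce
    then show ?thesis
      using abs_mult_kappa_le [of Sp \<xi> 2 j] unfolding B_def by simp
  qed
  ultimately show ?thesis
    by (intro exI [of _ "B + 1"]) (auto intro: add_increasing2)
qed

end
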